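(* Let $(X,\varphi)$ be a Smale space and $R\subset X$ a closed rectangle. Then the maps from $(R,d)$ to $(\mathcal K(R),d_H)$ given by $x\mapsto X^s(x,R)$ and $x\mapsto X^u(x,R)$ are continuous. In particular, the maps $R\ni x\mapsto\operatorname{diam}(X^s(x,R))$ and $R\ni x\mapsto\operatorname{diam}(X^u(x,R))$ are continuous.
   Context: A Smale space $(X,\varphi)$: compact metric space $(X,d)$, homeomorphism $\varphi$, constants $\varepsilon_X>0,\lambda_X>1$ and a continuous bracket $[\cdot,\cdot]$ on $\{(x,y):d(x,y)\le\varepsilon_X\}$ with $[x,x]=x$, $[x,[y,z]]=[x,z]$, $[[x,y],z]=[x,z]$, $\varphi([x,y])=[\varphi(x),\varphi(y)]$ (whenever defined), such that $\varphi$ contracts distances by $\lambda_X^{-1}$ on local stable sets $X^s(x,\varepsilon)=\{y:d(x,y)<\varepsilon,[x,y]=y\}$ and $\varphi^{-1}$ contracts by $\lambda_X^{-1}$ on local unstable sets $X^u(x,\varepsilon)=\{y:d(x,y)<\varepsilon,[y,x]=y\}$, $0<\varepsilon\le\varepsilon_X$. Fix $\varepsilon_X'\in(0,\varepsilon_X/2]$ such that $d(x,y)\le\varepsilon_X'$ implies $d(x,[x,y]),d(y,[x,y])<\varepsilon_X/2$. A rectangle is a nonempty $R\subset X$ with $\operatorname{diam}R\le\varepsilon_X'$ and $[x,y]\in R$ for all $x,y\in R$; for $x\in R$, $X^s(x,R)=X^s(x,2\varepsilon_X')\cap R$ and $X^u(x,R)=X^u(x,2\varepsilon_X')\cap R$.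 $\mathcal K(R)$ is the set of compact subsets of $R$ and $d_H$ the Hausdorff metric on it. *)

theory Defs
  imports "HOL-Analysis.Analysis"
begin

definition hausdist :: "'a::metric_space set \<Rightarrow> 'a set \<Rightarrow> real" where
  "hausdist A B =
     (if A \<noteq> {} \<and> B \<noteq> {} \<and> bounded A \<and> bounded B
      then max (SUP a\<in>A. infdist a B) (SUP b\<in>B. infdist b A) else 0)"

definition loc_stable :: "'a::metric_space set \<Rightarrow> ('a \<Rightarrow> 'a \<Rightarrow> 'a) \<Rightarrow> 'a \<Rightarrow> real \<Rightarrow> 'a set" where
  "loc_stable X br x e = {y \<in> X. dist x y < e \<and> br x y = y}"

definition loc_unstable :: "'a::metric_space set \<Rightarrow> ('a \<Rightarrow> 'a \<Rightarrow> 'a) \<Rightarrow> 'a \<Rightarrow> real \<Rightarrow> 'a set" where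
  "loc_unstable X br x e = {y \<in> X. dist x y < e \<and> br y x = y}"

text \<open>The bracket is a total function but only its values on
  {(x,y) in X x X. d(x,y) <= eps} matter. Identities are required
  whenever all brackets involved are defined.\<close>
definition smale_space ::
  "'a::metric_space set \<Rightarrow> ('a \<Rightarrow> 'a) \<Rightarrow> ('a \<Rightarrow> 'a \<Rightarrow> 'a) \<Rightarrow> real \<Rightarrow> real \<Rightarrow> bool" where
  "smale_space X \<phi> br eps lam \<longleftrightarrow>
     compact X \<and> (\<exists>\<psi>. homeomorphism X X \<phi> \<psi>) \<and> eps > 0 \<and> lam > 1 \<and>
     (\<forall>x\<in>X. \<forall>y\<in>X. dist x y \<le> eps \<longrightarrow> br x y \<in> X) \<and>
     continuous_on {(x, y). x \<in> X \<and> y \<in> X \<and> dist x y \<le> eps} (\<lambda>(x, y). br x y) \<and>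
     (\<forall>x\<in>X. br x x = x) \<and>
     (\<forall>x\<in>X. \<forall>y\<in>X. \<forall>z\<in>X. dist y z \<le> eps \<longrightarrow> dist x (br y z) \<le> eps \<longrightarrow> dist x z \<le> eps
        \<longrightarrow> br x (br y z) = br x z) \<and>
     (\<forall>x\<in>X. \<forall>y\<in>X. \<forall>z\<in>X. dist x y \<le> eps \<longrightarrow> dist (br x y) z \<le> eps \<longrightarrow> dist x z \<le> eps
        \<longrightarrow> br (br x y) z = br x z) \<and>
     (\<forall>x\<in>X. \<forall>y\<in>X. dist x y \<le> eps \<longrightarrow> dist (\<phi> x) (\<phi> y) \<le> eps
        \<longrightarrow> \<phi> (br x y) = br (\<phi> x) (\<phi> y)) \<and>
     (\<forall>e. 0 < e \<and> e \<le> eps \<longrightarrow> (\<forall>x\<in>X. \<forall>y\<in>loc_stable X br x e. \<forall>z\<in>loc_stable X br x e.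
        dist (\<phi> y) (\<phi> z) \<le> dist y z / lam)) \<and>
     (\<forall>e. 0 < e \<and> e \<le> eps \<longrightarrow> (\<forall>x\<in>X. \<forall>y\<in>loc_unstable X br x e. \<forall>z\<in>loc_unstable X br x e.
        dist (inv_into X \<phi> y) (inv_into X \<phi> z) \<le> dist y z / lam))"

definition admissible_eps' ::
  "'a::metric_space set \<Rightarrow> ('a \<Rightarrow> 'a \<Rightarrow> 'a) \<Rightarrow> real \<Rightarrow> real \<Rightarrow> bool" where
  "admissible_eps' X br eps eps' \<longleftrightarrow> 0 < eps' \<and> eps' \<le> eps / 2 \<and>
     (\<forall>x\<in>X. \<forall>y\<in>X. dist x y \<le> eps' \<longrightarrow> dist x (br x y) < eps / 2 \<and> dist y (br x y) < eps / 2)"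

definition rectangle ::
  "'a::metric_space set \<Rightarrow> ('a \<Rightarrow> 'a \<Rightarrow> 'a) \<Rightarrow> real \<Rightarrow> 'a set \<Rightarrow> bool" where
  "rectangle X br eps' R \<longleftrightarrow> R \<subseteq> X \<and> R \<noteq> {} \<and> diameter R \<le> eps' \<and>
     (\<forall>x\<in>R. \<forall>y\<in>R. br x y \<in> R)"

definition stable_in_rect ::
  "'a::metric_space set \<Rightarrow> ('a \<Rightarrow> 'a \<Rightarrow> 'a) \<Rightarrow> real \<Rightarrow> 'a set \<Rightarrow> 'a \<Rightarrow> 'a set" where
  "stable_in_rect X br eps' R x = loc_stable X br x (2 * eps') \<inter> R"

definition unstable_in_rect ::
  "'a::metric_space set \<Rightarrow> ('a \<Rightarrow> 'a \<Rightarrow> 'a) \<Rightarrow> real \<Rightarrow> 'a set \<Rightarrow> 'a \<Rightarrow> 'a set" where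
  "unstable_in_rect X br eps' R x = loc_unstable X br x (2 * eps') \<inter> R"

end

theory Submission
  imports Defs
begin

text \<open>Inside a rectangle R the bracket axioms give X^s(x,R) = [x,R] and X^u(x,R) = [R,x],
  so both sets are images of the fixed compact set R under a map depending continuously on x.
  The bracket is uniformly continuous on the compact set R \<times> R, hence [x,z] and [y,z] are
  uniformly close in z when x and y are close; such uniformly close images are close in the
  Hausdorff metric and have close diameters.\<close>

lemma diameter_le_metric:
  fixes S :: "'a::metric_space set"
  assumes "S \<noteq> {}" "\<And>x y. x \<in> S \<Longrightarrow> y \<in> S \<Longrightarrow> dist x y \<le> d"
  shows "diameter S \<le> d"
  unfolding diameter_def using assms by (auto intro!: cSUP_least)

lemma hausdist_image_le:
  fixes f g :: "'b \<Rightarrow> 'a::metric_space"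
  assumes "B \<noteq> {}" "bounded (f ` B)" "bounded (g ` B)"
    and close: "\<And>z. z \<in> B \<Longrightarrow> dist (f z) (g z) \<le> e"
  shows "hausdist (f ` B) (g ` B) \<le> e"
proof -
  have "(SUP a\<in>f ` B. infdist a (g ` B)) \<le> e"
    using assms by (auto intro!: cSUP_least infdist_le2)
  moreover have "(SUP a\<in>g ` B. infdist a (f ` B)) \<le> e"
    using assms by (auto intro!: cSUP_least infdist_le2 simp: dist_commute)
  ultimately show ?thesis
    unfolding hausdist_def using assms by auto
qed

lemma diameter_image_le:
  fixes f g :: "'b \<Rightarrow> 'a::metric_space"
  assumes "B \<noteq> {}" "bounded (g ` B)"
    and close: "\<And>z. z \<in> B \<Longrightarrow> dist (f z) (g z) \<le> e"
  shows "diameter (f ` B) \<le> diameter (g ` B) + 2 * e"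
proof (rule diameter_le_metric)
  show "f ` B \<noteq> {}" using assms(1) by simp
  fix a b assume "a \<in> f ` B" "b \<in> f ` B"
  then obtain z w where zw: "z \<in> B" "w \<in> B" "a = f z" "b = f w" by auto
  have "dist (f z) (f w) \<le> dist (f z) (g z) + dist (g z) (g w) + dist (f w) (g w)"
    by (metis dist_commute dist_triangle dist_triangle_le add_right_mono)
  also have "\<dots> \<le> e + diameter (g ` B) + e"
    using close zw assms(2) by (intro add_mono diameter_bounded_bound) auto
  finally show "dist a b \<le> diameter (g ` B) + 2 * e" using zw by simp
qed

lemma uniformly_continuous_on_Times_uniform_in_first:
  fixes f :: "'p::metric_space \<Rightarrow> 'b::metric_space \<Rightarrow> 'a::metric_space"
  assumes "uniformly_continuous_on (A \<times> B) (\<lambda>(x, z). f x z)" "e > 0"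
  obtains d where "d > 0"
    "\<And>x y z. x \<in> A \<Longrightarrow> y \<in> A \<Longrightarrow> z \<in> B \<Longrightarrow> dist x y < d \<Longrightarrow> dist (f x z) (f y z) < e"
proof -
  obtain d where "d > 0" and d: "\<forall>p\<in>A \<times> B. \<forall>q\<in>A \<times> B. dist q p < d \<longrightarrow>
      dist ((\<lambda>(x, z). f x z) q) ((\<lambda>(x, z). f x z) p) < e"
    using assms unfolding uniformly_continuous_on_def by blast
  have "dist (f x z) (f y z) < e"
    if "x \<in> A" "y \<in> A" "z \<in> B" "dist x y < d" for x y z
    using d[rule_format, of "(y, z)" "(x, z)"] that by (simp add: dist_Pair_Pair)
  with \<open>d > 0\<close> show thesis using that by blast
qed

context
  fixes f :: "'p::metric_space \<Rightarrow> 'b::metric_space \<Rightarrow> 'a::metric_space" and A B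
  assumes A: "compact A" and B: "compact B" "B \<noteq> {}"
    and cont: "continuous_on (A \<times> B) (\<lambda>(x, z). f x z)"
begin

lemma compact_image_slice:
  assumes "x \<in> A"
  shows "compact (f x ` B)"
proof -
  have "continuous_on B ((\<lambda>(x, z). f x z) \<circ> Pair x)"
    using assms by (intro continuous_on_compose continuous_on_subset[OF cont])
      (auto intro!: continuous_intros)
  then show ?thesis
    using compact_continuous_image B(1) by (simp add: o_def)
qed

lemma image_slices_uniformly_close:
  assumes "e > 0"
  obtains d where "d > 0"
    "\<And>x y z. x \<in> A \<Longrightarrow> y \<in> A \<Longrightarrow> z \<in> B \<Longrightarrow> dist x y < d \<Longrightarrow> dist (f x z) (f y z) < e"
  using uniformly_continuous_on_Times_uniform_in_first assms
    compact_uniformly_continuous[OF cont compact_Times[OF A B(1)]] by metis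

lemma hausdist_image_slice_continuous:
  "\<forall>x\<in>A. \<forall>e>0. \<exists>\<delta>>0. \<forall>y\<in>A. dist x y < \<delta> \<longrightarrow> hausdist (f x ` B) (f y ` B) < e"
proof (intro ballI allI impI)
  fix x and e :: real assume x: "x \<in> A" and "e > 0"
  then obtain d where "d > 0" and d: "\<And>y z. y \<in> A \<Longrightarrow> z \<in> B \<Longrightarrow> dist x y < d \<Longrightarrow>
      dist (f x z) (f y z) < e / 2"
    using image_slices_uniformly_close[of "e / 2"] by (metis half_gt_zero)
  have "hausdist (f x ` B) (f y ` B) < e" if "y \<in> A" "dist x y < d" for y
  proof -
    have "hausdist (f x ` B) (f y ` B) \<le> e / 2"
      using B(2) compact_image_slice x that d
      by (intro hausdist_image_le) (auto intro: compact_imp_bounded less_imp_le)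
    with \<open>e > 0\<close> show ?thesis by linarith
  qed
  with \<open>d > 0\<close> show "\<exists>\<delta>>0. \<forall>y\<in>A. dist x y < \<delta> \<longrightarrow> hausdist (f x ` B) (f y ` B) < e"
    by blast
qed

lemma diameter_image_slice_continuous: "continuous_on A (\<lambda>x. diameter (f x ` B))"
  unfolding continuous_on_iff
proof (intro ballI allI impI)
  fix x and e :: real assume x: "x \<in> A" and "e > 0"
  then obtain d where "d > 0" and d: "\<And>y z. y \<in> A \<Longrightarrow> z \<in> B \<Longrightarrow> dist y x < d \<Longrightarrow>
      dist (f y z) (f x z) < e / 3"
    using image_slices_uniformly_close[of "e / 3"] by (metis divide_pos_pos zero_less_numeral)
  have "dist (diameter (f y ` B)) (diameter (f x ` B)) < e" if y: "y \<in> A" "dist y x < d" for y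
  proof -
    have bounded: "bounded (f u ` B)" if "u \<in> A" for u
      using compact_image_slice[OF that] by (rule compact_imp_bounded)
    have close: "dist (f y z) (f x z) \<le> e / 3" "dist (f x z) (f y z) \<le> e / 3"
      if "z \<in> B" for z
      using d[OF y(1) that y(2)] by (simp_all add: dist_commute)
    have "diameter (f y ` B) \<le> diameter (f x ` B) + 2 * (e / 3)"
      using B(2) bounded[OF x] close(1) by (rule diameter_image_le)
    moreover have "diameter (f x ` B) \<le> diameter (f y ` B) + 2 * (e / 3)"
      using B(2) bounded[OF y(1)] close(2) by (rule diameter_image_le)
    ultimately show ?thesis using \<open>e > 0\<close> by (simp add: dist_real_def abs_less_iff)
  qed
  with \<open>d > 0\<close> show "\<exists>d>0. \<forall>y\<in>A. dist y x < d \<longrightarrow>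
      dist (diameter (f y ` B)) (diameter (f x ` B)) < e"
    by blast
qed

end

locale smale_rectangle =
  fixes X :: "'a::metric_space set" and \<phi> br eps lam eps' R
  assumes smale: "smale_space X \<phi> br eps lam"
    and admissible: "admissible_eps' X br eps eps'"
    and rect: "rectangle X br eps' R"
begin

lemma compact_space: "compact X"
  using smale by (simp add: smale_space_def)

lemma bracket_absorb_right:
  "\<lbrakk>x \<in> X; y \<in> X; z \<in> X; dist y z \<le> eps; dist x (br y z) \<le> eps; dist x z \<le> eps\<rbrakk>
    \<Longrightarrow> br x (br y z) = br x z"
  using smale unfolding smale_space_def by blast

lemma bracket_absorb_left:
  "\<lbrakk>x \<in> X; y \<in> X; z \<in> X; dist x y \<le> eps; dist (br x y) z \<le> eps; dist x z \<le> eps\<rbrakk>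
    \<Longrightarrow> br (br x y) z = br x z"
  using smale unfolding smale_space_def by blast

lemma rect_subset: "R \<subseteq> X"
  using rect by (simp add: rectangle_def)

lemma bracket_in_rect: "x \<in> R \<Longrightarrow> y \<in> R \<Longrightarrow> br x y \<in> R"
  using rect by (simp add: rectangle_def)

lemma dist_in_rect:
  assumes "x \<in> R" "y \<in> R"
  shows "dist x y \<le> eps'"
proof -
  have "bounded R"
    using compact_imp_bounded[OF compact_space] rect_subset by (rule bounded_subset)
  then have "dist x y \<le> diameter R"
    using assms by (rule diameter_bounded_bound)
  with rect show ?thesis by (simp add: rectangle_def)
qed

lemma dist_in_rect_le_eps: "x \<in> R \<Longrightarrow> y \<in> R \<Longrightarrow> dist x y \<le> eps"
  using dist_in_rect[of x y] admissible by (simp add: admissible_eps'_def)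

lemma dist_in_rect_less: "x \<in> R \<Longrightarrow> y \<in> R \<Longrightarrow> dist x y < 2 * eps'"
  using dist_in_rect[of x y] admissible by (simp add: admissible_eps'_def)

lemma bracket_continuous_on_rect: "continuous_on (R \<times> R) (\<lambda>(x, y). br x y)"
proof (rule continuous_on_subset)
  show "continuous_on {(x, y). x \<in> X \<and> y \<in> X \<and> dist x y \<le> eps} (\<lambda>(x, y). br x y)"
    using smale by (simp add: smale_space_def)
  show "R \<times> R \<subseteq> {(x, y). x \<in> X \<and> y \<in> X \<and> dist x y \<le> eps}"
    using rect_subset dist_in_rect_le_eps by auto
qed

lemma stable_in_rect_eq_image:
  assumes x: "x \<in> R"
  shows "stable_in_rect X br eps' R x = br x ` R"
proof
  show "stable_in_rect X br eps' R x \<subseteq> br x ` R"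
    unfolding stable_in_rect_def loc_stable_def by (auto intro!: image_eqI)
  show "br x ` R \<subseteq> stable_in_rect X br eps' R x"
  proof
    fix y assume "y \<in> br x ` R"
    then obtain z where z: "z \<in> R" and y: "y = br x z" by auto
    have yR: "y \<in> R" using x z y bracket_in_rect by simp
    have "br x y = y"
      unfolding y using x z yR y rect_subset dist_in_rect_le_eps
      by (intro bracket_absorb_right) auto
    then show "y \<in> stable_in_rect X br eps' R x"
      using x yR rect_subset dist_in_rect_less
      by (auto simp: stable_in_rect_def loc_stable_def)
  qed
qed

lemma unstable_in_rect_eq_image:
  assumes x: "x \<in> R"
  shows "unstable_in_rect X br eps' R x = (\<lambda>z. br z x) ` R"
proof
  show "unstable_in_rect X br eps' R x \<subseteq> (\<lambda>z. br z x) ` R"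
    unfolding unstable_in_rect_def loc_unstable_def by (auto intro!: image_eqI)
  show "(\<lambda>z. br z x) ` R \<subseteq> unstable_in_rect X br eps' R x"
  proof
    fix y assume "y \<in> (\<lambda>z. br z x) ` R"
    then obtain z where z: "z \<in> R" and y: "y = br z x" by auto
    have yR: "y \<in> R" using x z y bracket_in_rect by simp
    have "br y x = y"
      unfolding y using x z yR y rect_subset dist_in_rect_le_eps
      by (subst bracket_absorb_left) auto
    then show "y \<in> unstable_in_rect X br eps' R x"
      using x yR rect_subset dist_in_rect_less
      by (auto simp: unstable_in_rect_def loc_unstable_def)
  qed
qed

end

theorem lemma6p14:
  fixes X :: "'a::metric_space set" and \<phi> :: "'a \<Rightarrow> 'a" and br :: "'a \<Rightarrow> 'a \<Rightarrow> 'a"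
    and eps lam eps' :: real and R :: "'a set"
  assumes "smale_space X \<phi> br eps lam"
    and "admissible_eps' X br eps eps'"
    and "rectangle X br eps' R" and "closed R"
  shows "(\<forall>x\<in>R. compact (stable_in_rect X br eps' R x) \<and> stable_in_rect X br eps' R x \<noteq> {}) \<and>
         (\<forall>x\<in>R. \<forall>e>0. \<exists>\<delta>>0. \<forall>y\<in>R. dist x y < \<delta> \<longrightarrow>
            hausdist (stable_in_rect X br eps' R x) (stable_in_rect X br eps' R y) < e) \<and>
         (\<forall>x\<in>R. compact (unstable_in_rect X br eps' R x) \<and> unstable_in_rect X br eps' R x \<noteq> {}) \<and>
         (\<forall>x\<in>R. \<forall>e>0. \<exists>\<delta>>0. \<forall>y\<in>R. dist x y < \<delta> \<longrightarrow>
            hausdist (unstable_in_rect X br eps' R x) (unstable_in_rect X br eps' R y) < e) \<and>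
         continuous_on R (\<lambda>x. diameter (stable_in_rect X br eps' R x)) \<and>
         continuous_on R (\<lambda>x. diameter (unstable_in_rect X br eps' R x))"
proof -
  interpret smale_rectangle X \<phi> br eps lam eps' R
    using assms(1-3) by unfold_locales
  have R: "compact R" "R \<noteq> {}"
    using compact_Int_closed[OF compact_space assms(4)] rect_subset assms(3)
    by (auto simp: Int_absorb1 rectangle_def)
  have br_cont: "continuous_on (R \<times> R) (\<lambda>(x, z). br x z)"
    and br_swap_cont: "continuous_on (R \<times> R) (\<lambda>(x, z). br z x)"
    using bracket_continuous_on_rect continuous_on_swap_args by blast+
  note stable = compact_image_slice[OF R(1) R br_cont]
    hausdist_image_slice_continuous[OF R(1) R br_cont]
    diameter_image_slice_continuous[OF R(1) R br_cont]
  note unstable = compact_image_slice[OF R(1) R br_swap_cont]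
    hausdist_image_slice_continuous[OF R(1) R br_swap_cont]
    diameter_image_slice_continuous[OF R(1) R br_swap_cont]
  show ?thesis
    using stable unstable R(2)
    by (simp add: stable_in_rect_eq_image unstable_in_rect_eq_image cong: continuous_on_cong)
qed

end
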